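(* Let $G=(K\cup I,E)$ be a split graph such that no vertex $i\in I$ satisfies $N(i)=K$, and let $(V,\mathcal{F})$ be its split graph vertex shelling antimatroid. Then the set of paths of $(V,\mathcal{F})$ equals $P=P_1\cup P_2\cup P_3$, where $P_1=\{\{i\}: i\in I\}$, $P_2=\{\{k\}\cup(N(k)\cap I): k\in K\}$, $P_3=\{\operatorname{fos}(i)\cup\{k\}\cup\big((N(k)\cap I)\setminus\{i\}\big): i\in I,\ k\in N(i)\}$.
   Context: A split graph $G=(K\cup I,E)$ is a finite simple graph whose vertex set $V=K\cup I$ comes with a fixed partition into a clique $K$ and an independent set $I$. We write $u\sim v$ for adjacency; for $F\subseteq V$, $N(F)$ is the set of vertices of $V\setminus F$ adjacent to some vertex of $F$, and $N(v)=N(\{v\})$. A vertex is simplicial if its neighbours induce a clique. The split graph vertex shelling antimatroid of $G$ is $(V,\mathcal{F})$ where $F\subseteq V$ is feasible iff there is an ordering $f_1,\dots,f_{|F|}$ of $F$ such that each $f_j$ is simplicial in $G$ minus $\{f_1,\dots,f_{j-1}\}$ (the empty set is feasible). For $i\in I$, $\operatorname{fos}(i)=\{k\in K: k\not\sim i\}\cup\{i'\in I: N(i')\not\subseteq N(i)\}$. A path of an antimatroid $(V,\mathcal{F})$ is a nonempty feasible set that is not the union of two feasible sets both different from it (equivalently, a feasible set containing exactly one element whose removal leaves a feasible set). *)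

theory Defs
  imports Main
begin

definition split_graph :: "'a set \<Rightarrow> 'a set \<Rightarrow> ('a \<Rightarrow> 'a \<Rightarrow> bool) \<Rightarrow> bool" where
  "split_graph K I adj \<longleftrightarrow>
     finite K \<and> finite I \<and> K \<inter> I = {} \<and>
     (\<forall>x y. adj x y \<longrightarrow> adj y x) \<and>
     (\<forall>x. \<not> adj x x) \<and>
     (\<forall>x y. adj x y \<longrightarrow> x \<in> K \<union> I \<and> y \<in> K \<union> I) \<and>
     (\<forall>x\<in>K. \<forall>y\<in>K. x \<noteq> y \<longrightarrow> adj x y) \<and>
     (\<forall>x\<in>I. \<forall>y\<in>I. \<not> adj x y)"

definition nbhd :: "'a set \<Rightarrow> ('a \<Rightarrow> 'a \<Rightarrow> bool) \<Rightarrow> 'a set \<Rightarrow> 'a set" where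
  "nbhd V adj F = {v \<in> V - F. \<exists>f\<in>F. adj f v}"

definition simplicial :: "('a \<Rightarrow> 'a \<Rightarrow> bool) \<Rightarrow> 'a set \<Rightarrow> 'a \<Rightarrow> bool" where
  "simplicial adj W v \<longleftrightarrow> v \<in> W \<and>
     (\<forall>x\<in>W. \<forall>y\<in>W. adj v x \<and> adj v y \<and> x \<noteq> y \<longrightarrow> adj x y)"

definition shelling_feasible :: "'a set \<Rightarrow> ('a \<Rightarrow> 'a \<Rightarrow> bool) \<Rightarrow> 'a set \<Rightarrow> bool" where
  "shelling_feasible V adj F \<longleftrightarrow>
     (\<exists>xs. distinct xs \<and> set xs = F \<and>
        (\<forall>j < length xs. simplicial adj (V - set (take j xs)) (xs ! j)))"

definition antimatroid_path :: "('a set \<Rightarrow> bool) \<Rightarrow> 'a set \<Rightarrow> bool" where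
  "antimatroid_path feas F \<longleftrightarrow> F \<noteq> {} \<and> feas F \<and>
     \<not> (\<exists>A B. feas A \<and> feas B \<and> A \<noteq> F \<and> B \<noteq> F \<and> F = A \<union> B)"

definition fos :: "'a set \<Rightarrow> 'a set \<Rightarrow> ('a \<Rightarrow> 'a \<Rightarrow> bool) \<Rightarrow> 'a \<Rightarrow> 'a set" where
  "fos K I adj i = {k \<in> K. \<not> adj k i} \<union>
     {i' \<in> I. \<not> (nbhd (K \<union> I) adj {i'} \<subseteq> nbhd (K \<union> I) adj {i})}"

end

theory Submission
  imports Defs
begin

text \<open>A feasible set F is a path iff it has an element e such that every feasible subset of F
  containing e is F itself. Let e be the last vertex of a shelling order of a path F. If e \<in> I,
  then {e} is feasible, so F = {e}. If e \<in> K and all I-neighbours of e lie in F, then F is the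
  feasible set {e} \<union> (N(e) \<inter> I). Otherwise some i \<in> N(e) \<inter> I is missing from F; simpliciality of
  e at the end forces N(e) \<inter> I - {i} \<subseteq> F, and comparing the removal times of e with those of the
  non-neighbours of i forces fos(i) \<subseteq> F, so F is the feasible set
  fos(i) \<union> {e} \<union> (N(e) \<inter> I - {i}). Conversely, each of these sets is minimal among feasible sets
  containing the respective vertex; only for {k} \<union> (N(k) \<inter> I) is the hypothesis N(i) \<noteq> K needed.\<close>

lemma shelling_feasible_empty: "shelling_feasible V adj {}"
  unfolding shelling_feasible_def by (rule exI[of _ "[]"]) simp

lemma shelling_feasible_insert:
  assumes "shelling_feasible V adj A" "x \<notin> A" "simplicial adj (V - A) x"
  shows "shelling_feasible V adj (insert x A)"
proof -
  obtain xs where xs: "distinct xs" "set xs = A"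
    "\<forall>j<length xs. simplicial adj (V - set (take j xs)) (xs ! j)"
    using assms(1) unfolding shelling_feasible_def by blast
  show ?thesis unfolding shelling_feasible_def
  proof (rule exI[of _ "xs @ [x]"], intro conjI allI impI)
    show "distinct (xs @ [x])" using xs assms(2) by simp
    show "set (xs @ [x]) = insert x A" using xs by auto
    fix j assume j: "j < length (xs @ [x])"
    show "simplicial adj (V - set (take j (xs @ [x]))) ((xs @ [x]) ! j)"
    proof (cases "j < length xs")
      case True then show ?thesis using xs(3) by (simp add: nth_append)
    next
      case False then have "j = length xs" using j by simp
      then show ?thesis using assms(3) xs(2) by (simp add: nth_append)
    qed
  qed
qed

lemma shelling_feasible_Un_simplicial:
  assumes "finite T" "shelling_feasible V adj A" "\<forall>t\<in>T. simplicial adj (V - A) t"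
  shows "shelling_feasible V adj (A \<union> T)"
  using assms
proof (induction T rule: finite_induct)
  case empty then show ?case by simp
next
  case (insert t T)
  then have IH: "shelling_feasible V adj (A \<union> T)" by blast
  show ?case
  proof (cases "t \<in> A \<union> T")
    case True then show ?thesis using IH by (simp add: insert_absorb)
  next
    case False
    have "simplicial adj (V - A) t" using insert by blast
    then have "simplicial adj (V - (A \<union> T)) t"
      using False unfolding simplicial_def by blast
    then show ?thesis using shelling_feasible_insert[OF IH False] by simp
  qed
qed

lemma shelling_feasible_last:
  assumes "shelling_feasible V adj F" "F \<noteq> {}"
  obtains e F' where "e \<notin> F'" "F = insert e F'" "shelling_feasible V adj F'"
    "simplicial adj (V - F') e"
proof -
  obtain xs where xs: "distinct xs" "set xs = F"
    "\<forall>j<length xs. simplicial adj (V - set (take j xs)) (xs ! j)"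
    using assms(1) unfolding shelling_feasible_def by blast
  have "xs \<noteq> []" using xs(2) assms(2) by auto
  then have xs_snoc: "xs = butlast xs @ [last xs]" by simp
  have "last xs \<notin> set (butlast xs)" "F = insert (last xs) (set (butlast xs))"
    using xs(1,2) xs_snoc by (metis distinct_append disjoint_iff list.set_intros(1),
        metis Un_insert_right append_Nil2 list.simps(15) set_append sup_commute)
  moreover have "shelling_feasible V adj (set (butlast xs))"
    unfolding shelling_feasible_def
  proof (rule exI[of _ "butlast xs"], intro conjI allI impI)
    show "distinct (butlast xs)" using xs(1) by (simp add: distinct_butlast)
    fix j assume "j < length (butlast xs)"
    then show "simplicial adj (V - set (take j (butlast xs))) (butlast xs ! j)"
      using xs(3) by (simp add: nth_butlast take_butlast)
  qed simp
  moreover have "simplicial adj (V - set (butlast xs)) (last xs)"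
    using xs(3)[rule_format, of "length xs - 1"] \<open>xs \<noteq> []\<close>
    by (simp add: butlast_conv_take last_conv_nth)
  ultimately show ?thesis using that by blast
qed

text \<open>A feasible set shelled with x and y in some order stays simplicial at the earlier of the
  two once everything else of the set is deleted.\<close>

lemma shelling_feasible_simplicial_pair:
  assumes "shelling_feasible V adj A" "x \<in> A" "y \<in> A"
  shows "simplicial adj ((V - A) \<union> {x, y}) x \<or> simplicial adj ((V - A) \<union> {x, y}) y"
proof -
  obtain xs where xs: "distinct xs" "set xs = A"
    "\<forall>j<length xs. simplicial adj (V - set (take j xs)) (xs ! j)"
    using assms(1) unfolding shelling_feasible_def by blast
  obtain p where p: "p < length xs" "x = xs ! p" using assms(2) xs(2) by (metis in_set_conv_nth)
  obtain q where q: "q < length xs" "y = xs ! q" using assms(3) xs(2) by (metis in_set_conv_nth)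
  have earlier: "simplicial adj ((V - A) \<union> {xs ! a, xs ! b}) (xs ! a)"
    if ab: "a \<le> b" "b < length xs" for a b
  proof -
    have sa: "simplicial adj (V - set (take a xs)) (xs ! a)"
      and sb: "simplicial adj (V - set (take b xs)) (xs ! b)" using xs(3) ab by simp_all
    have "xs ! b \<notin> set (take a xs)"
    proof
      assume "xs ! b \<in> set (take a xs)"
      then obtain r where "r < a" "xs ! r = xs ! b"
        by (auto simp: in_set_conv_nth)
      then show False using xs(1) ab nth_eq_iff_index_eq by fastforce
    qed
    moreover have "xs ! b \<in> V" using sb unfolding simplicial_def by blast
    ultimately have "(V - A) \<union> {xs ! a, xs ! b} \<subseteq> V - set (take a xs)"
      using sa xs(2) set_take_subset[of a xs] unfolding simplicial_def by blast
    then show ?thesis using sa unfolding simplicial_def by blast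
  qed
  show ?thesis
  proof (cases "p \<le> q")
    case True then show ?thesis using earlier[of p q] p q by simp
  next
    case False then show ?thesis using earlier[of q p] p q by (simp add: insert_commute)
  qed
qed

lemma shelling_feasible_simplicial_member:
  "shelling_feasible V adj A \<Longrightarrow> x \<in> A \<Longrightarrow> simplicial adj ((V - A) \<union> {x}) x"
  using shelling_feasible_simplicial_pair[of V adj A x x] by simp

lemma antimatroid_pathI:
  assumes "feas F" "e \<in> F" "\<And>A. feas A \<Longrightarrow> A \<subseteq> F \<Longrightarrow> e \<in> A \<Longrightarrow> A = F"
  shows "antimatroid_path feas F"
  unfolding antimatroid_path_def using assms by blast

lemma antimatroid_path_minimal:
  assumes "antimatroid_path feas F" "feas F'" "F = insert e F'" "e \<notin> F'"
    and "feas A" "A \<subseteq> F" "e \<in> A"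
  shows "A = F"
  using assms unfolding antimatroid_path_def by blast

locale split_graph_setting =
  fixes K I :: "'a set" and adj :: "'a \<Rightarrow> 'a \<Rightarrow> bool"
  assumes split: "split_graph K I adj"
begin

abbreviation feas where "feas \<equiv> shelling_feasible (K \<union> I) adj"

lemma finite_K: "finite K" and finite_I: "finite I" and disjoint_KI: "K \<inter> I = {}"
  and adj_sym: "adj x y \<Longrightarrow> adj y x" and adj_irrefl: "\<not> adj x x"
  and adj_in_V: "adj x y \<Longrightarrow> x \<in> K \<union> I \<and> y \<in> K \<union> I"
  and adj_K: "x \<in> K \<Longrightarrow> y \<in> K \<Longrightarrow> x \<noteq> y \<Longrightarrow> adj x y"
  and not_adj_I: "x \<in> I \<Longrightarrow> y \<in> I \<Longrightarrow> \<not> adj x y"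
  using split unfolding split_graph_def by blast+

lemma nbhd_singleton: "nbhd (K \<union> I) adj {v} = {u. adj v u}"
  unfolding nbhd_def using adj_in_V adj_irrefl by blast

lemma fos_eq: "fos K I adj i = (K - {u. adj i u}) \<union> {j \<in> I. \<not> {u. adj j u} \<subseteq> {u. adj i u}}"
  unfolding fos_def nbhd_singleton using adj_sym by blast

lemma adj_I_in_K: "i \<in> I \<Longrightarrow> adj i k \<Longrightarrow> k \<in> K"
  using adj_in_V not_adj_I by blast

lemma simplicial_I: "i \<in> I \<Longrightarrow> i \<in> W \<Longrightarrow> simplicial adj W i"
  unfolding simplicial_def using adj_in_V not_adj_I adj_K by blast

lemma feasible_subset_I:
  assumes "S \<subseteq> I" shows "feas S"
proof -
  have "simplicial adj (K \<union> I - {}) t" if "t \<in> S" for t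
    using that assms by (intro simplicial_I) auto
  then have "feas ({} \<union> S)"
    by (intro shelling_feasible_Un_simplicial finite_subset[OF assms finite_I]
        shelling_feasible_empty) blast
  then show ?thesis by simp
qed

lemma feasible_singleton_I: "i \<in> I \<Longrightarrow> feas {i}"
  by (rule feasible_subset_I) simp

text \<open>A vertex k \<in> K that has been deleted from the graph was simplicial when deleted, so by
  then every vertex of K not adjacent to one of its I-neighbours i was gone; the same comparison
  applied to such a deleted vertex k' shows that every j \<in> I with a neighbour outside N(i)
  was gone as well.\<close>

lemma fos_subset_feasible:
  assumes A: "feas A" and k: "k \<in> A" "k \<in> K" and i: "i \<in> I" "i \<notin> A" "adj k i"
    and nbrs: "{u. adj k u} \<inter> I - {i} \<subseteq> A"
  shows "fos K I adj i \<subseteq> A"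
proof -
  have K_part: "t \<in> A" if t: "t \<in> K" "\<not> adj i t" for t
  proof (rule ccontr)
    assume tA: "t \<notin> A"
    have "t \<noteq> k" using t(2) adj_sym[OF i(3)] by blast
    then have "adj k t" using adj_K[OF k(2) t(1)] by simp
    moreover have "t \<noteq> i" using t(1) i(1) disjoint_KI by blast
    moreover have "simplicial adj ((K \<union> I - A) \<union> {k}) k"
      using shelling_feasible_simplicial_member A k(1) .
    ultimately have "adj t i" using i t tA unfolding simplicial_def by blast
    then show False using t(2) adj_sym by blast
  qed
  have I_part: "j \<in> A" if j: "j \<in> I" "\<not> {u. adj j u} \<subseteq> {u. adj i u}" for j
  proof (rule ccontr)
    assume jA: "j \<notin> A"
    obtain k' where k': "adj j k'" "\<not> adj i k'" using j(2) by blast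
    have k'K: "k' \<in> K" using adj_I_in_K[OF j(1) k'(1)] .
    have k'A: "k' \<in> A" using K_part[OF k'K k'(2)] .
    have "k \<noteq> k'" using k'(2) adj_sym[OF i(3)] by blast
    then have adj_kk': "adj k k'" using adj_K[OF k(2) k'K] by simp
    from shelling_feasible_simplicial_pair[OF A k(1) k'A] show False
    proof
      assume "simplicial adj ((K \<union> I - A) \<union> {k, k'}) k"
      moreover have "i \<noteq> k'" using i(1) k'K disjoint_KI by blast
      ultimately have "adj i k'" using i adj_kk' unfolding simplicial_def by blast
      then show False using k'(2) by blast
    next
      assume "simplicial adj ((K \<union> I - A) \<union> {k, k'}) k'"
      moreover have "j \<noteq> k" using k(2) j(1) disjoint_KI by blast
      moreover note adj_sym[OF k'(1)] adj_sym[OF adj_kk']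
      ultimately have "adj j k" using j(1) jA unfolding simplicial_def by blast
      moreover have "j \<noteq> i" using j(2) by blast
      ultimately show False using nbrs jA j(1) adj_sym by blast
    qed
  qed
  show ?thesis unfolding fos_eq using K_part I_part by blast
qed

definition P2 :: "'a \<Rightarrow> 'a set" where
  "P2 k = {k} \<union> ({u. adj k u} \<inter> I)"

definition P3 :: "'a \<Rightarrow> 'a \<Rightarrow> 'a set" where
  "P3 i k = fos K I adj i \<union> {k} \<union> (({u. adj k u} \<inter> I) - {i})"

lemma feasible_P2: assumes k: "k \<in> K" shows "feas (P2 k)"
proof -
  let ?S = "{u. adj k u} \<inter> I"
  have "k \<notin> ?S" using k disjoint_KI by blast
  moreover have "simplicial adj (K \<union> I - ?S) k"
    unfolding simplicial_def using k disjoint_KI adj_in_V adj_K by blast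
  ultimately show ?thesis
    using shelling_feasible_insert[OF feasible_subset_I] unfolding P2_def by simp
qed

text \<open>Shell first the I-vertices of P3 i k, then the non-neighbours of i in K (all their
  remaining neighbours lie in K), and finally k, whose only remaining I-neighbour is i.\<close>

lemma feasible_P3: assumes i: "i \<in> I" and ik: "adj i k" shows "feas (P3 i k)"
proof -
  have k: "k \<in> K" using adj_I_in_K i ik .
  let ?S = "{j \<in> I. \<not> {u. adj j u} \<subseteq> {u. adj i u}} \<union> ({u. adj k u} \<inter> I - {i})"
  let ?T = "K - {u. adj i u}"
  have "\<forall>t\<in>?T. simplicial adj (K \<union> I - ?S) t"
  proof
    fix t assume t: "t \<in> ?T"
    have in_K: "x \<in> K" if x: "x \<in> K \<union> I - ?S" "adj t x" for x
    proof (rule ccontr)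
      assume "x \<notin> K"
      then have "{u. adj x u} \<subseteq> {u. adj i u}" using x by blast
      then have "adj i t" using adj_sym[OF x(2)] by blast
      then show False using t by blast
    qed
    show "simplicial adj (K \<union> I - ?S) t"
      unfolding simplicial_def
    proof (intro conjI ballI impI)
      show "t \<in> K \<union> I - ?S" using t disjoint_KI by blast
      fix x y assume "x \<in> K \<union> I - ?S" "y \<in> K \<union> I - ?S" "adj t x \<and> adj t y \<and> x \<noteq> y"
      then show "adj x y" using in_K adj_K by blast
    qed
  qed
  moreover have "feas ?S" by (rule feasible_subset_I) blast
  ultimately have feas_ST: "feas (?S \<union> ?T)"
    using shelling_feasible_Un_simplicial[OF finite_subset[OF _ finite_K]] by blast
  have k_new: "k \<notin> ?S \<union> ?T" using k ik disjoint_KI by blast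
  have "simplicial adj (K \<union> I - (?S \<union> ?T)) k"
    unfolding simplicial_def
  proof (intro conjI ballI impI)
    show "k \<in> K \<union> I - (?S \<union> ?T)" using k k_new by blast
    fix x y assume x: "x \<in> K \<union> I - (?S \<union> ?T)" and y: "y \<in> K \<union> I - (?S \<union> ?T)"
      and xy: "adj k x \<and> adj k y \<and> x \<noteq> y"
    have x_i: "x \<in> I \<Longrightarrow> x = i" and y_i: "y \<in> I \<Longrightarrow> y = i" using x y xy by blast+
    show "adj x y"
    proof (cases "x \<in> I")
      case True
      then have "y \<in> K" using x_i y_i xy y by blast
      then show ?thesis using True x_i y by blast
    next
      case False
      then have x_K: "x \<in> K" using x by blast
      show ?thesis
      proof (cases "y \<in> I")
        case True
        have "adj i x" using x x_K by blast
        then show ?thesis using y_i[OF True] adj_sym by blast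
      next
        case False then show ?thesis using y x_K adj_K xy by blast
      qed
    qed
  qed
  then have "feas (insert k (?S \<union> ?T))" by (rule shelling_feasible_insert[OF feas_ST k_new])
  moreover have "insert k (?S \<union> ?T) = P3 i k" unfolding P3_def fos_eq by auto
  ultimately show ?thesis by simp
qed

lemma P2_minimal:
  assumes no_full: "\<forall>i\<in>I. nbhd (K \<union> I) adj {i} \<noteq> K"
    and k: "k \<in> K" and A: "feas A" "A \<subseteq> P2 k" "k \<in> A"
  shows "A = P2 k"
proof -
  have "j \<in> A" if j: "j \<in> I" "adj k j" for j
  proof (rule ccontr)
    assume jA: "j \<notin> A"
    have s: "simplicial adj ((K \<union> I - A) \<union> {k}) k"
      using shelling_feasible_simplicial_member[OF A(1,3)] .
    have "adj j k'" if k': "k' \<in> K" for k'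
    proof (cases "k' = k")
      case True then show ?thesis using adj_sym[OF j(2)] by simp
    next
      case False
      then have "k' \<notin> A" using A(2) k' disjoint_KI unfolding P2_def by blast
      moreover have "adj k k'" using adj_K[OF k k'] False by metis
      moreover have "j \<noteq> k'" using j(1) k' disjoint_KI by blast
      ultimately show ?thesis using s j jA k' unfolding simplicial_def by blast
    qed
    then have "{u. adj j u} = K" using adj_I_in_K j by blast
    then show False using no_full j nbhd_singleton by auto
  qed
  then show ?thesis using A unfolding P2_def by blast
qed

lemma P3_minimal:
  assumes i: "i \<in> I" and ik: "adj i k" and A: "feas A" "A \<subseteq> P3 i k" "k \<in> A"
  shows "A = P3 i k"
proof -
  have k: "k \<in> K" using adj_I_in_K i ik .
  have iA: "i \<notin> A" using A(2) i k disjoint_KI unfolding P3_def fos_eq by blast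
  have nbrs: "{u. adj k u} \<inter> I - {i} \<subseteq> A"
  proof
    fix j assume j: "j \<in> {u. adj k u} \<inter> I - {i}"
    show "j \<in> A"
    proof (rule ccontr)
      assume "j \<notin> A"
      then have "adj i j"
        using shelling_feasible_simplicial_member[OF A(1,3)] adj_sym[OF ik] iA i j
        unfolding simplicial_def by blast
      then show False using not_adj_I i j by blast
    qed
  qed
  have "fos K I adj i \<subseteq> A" using fos_subset_feasible[OF A(1,3) k i iA adj_sym[OF ik] nbrs] .
  then show ?thesis using A nbrs unfolding P3_def by blast
qed

lemma path_cases:
  assumes "antimatroid_path feas F"
  shows "(\<exists>i\<in>I. F = {i}) \<or> (\<exists>k\<in>K. F = P2 k) \<or> (\<exists>i\<in>I. \<exists>k. adj i k \<and> F = P3 i k)"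
proof -
  have "feas F" "F \<noteq> {}" using assms unfolding antimatroid_path_def by blast+
  then obtain e F' where eF: "e \<notin> F'" "F = insert e F'" and "feas F'"
    and e_simp: "simplicial adj (K \<union> I - F') e"
    by (rule shelling_feasible_last)
  have minimal: "A = F" if "feas A" "A \<subseteq> F" "e \<in> A" for A
    using antimatroid_path_minimal[OF assms \<open>feas F'\<close> eF(2,1)] that .
  have e_F: "e \<in> F" using eF by blast
  have "e \<in> K \<union> I" using e_simp unfolding simplicial_def by blast
  then consider "e \<in> I" | "e \<in> K" "{u. adj e u} \<inter> I \<subseteq> F"
    | i where "e \<in> K" "i \<in> I" "adj e i" "i \<notin> F" by blast
  then show ?thesis
  proof cases
    case 1
    have "{e} = F" by (rule minimal[OF feasible_singleton_I[OF 1]]) (use e_F in auto)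
    then show ?thesis using 1 by blast
  next
    case 2
    have "P2 e = F" by (rule minimal[OF feasible_P2[OF 2(1)]]) (use 2 e_F in \<open>auto simp: P2_def\<close>)
    then show ?thesis using 2 by blast
  next
    case (3 i)
    have nbrs: "{u. adj e u} \<inter> I - {i} \<subseteq> F"
    proof
      fix j assume j: "j \<in> {u. adj e u} \<inter> I - {i}"
      show "j \<in> F"
      proof (rule ccontr)
        assume "j \<notin> F"
        then have "adj i j" using e_simp 3(2,3,4) eF j unfolding simplicial_def by blast
        then show False using not_adj_I 3(2) j by blast
      qed
    qed
    have "fos K I adj i \<subseteq> F" using fos_subset_feasible[OF \<open>feas F\<close> e_F 3(1,2,4,3) nbrs] .
    then have "P3 i e \<subseteq> F" using nbrs e_F unfolding P3_def by blast
    moreover have "adj i e" using adj_sym[OF 3(3)] .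
    ultimately have "P3 i e = F"
      using minimal[OF feasible_P3[OF 3(2)]] unfolding P3_def by blast
    then show ?thesis using 3(2) \<open>adj i e\<close> by blast
  qed
qed

lemma path_iff:
  assumes "\<forall>i\<in>I. nbhd (K \<union> I) adj {i} \<noteq> K"
  shows "antimatroid_path feas F \<longleftrightarrow>
    (\<exists>i\<in>I. F = {i}) \<or> (\<exists>k\<in>K. F = P2 k) \<or> (\<exists>i\<in>I. \<exists>k. adj i k \<and> F = P3 i k)"
proof
  assume "(\<exists>i\<in>I. F = {i}) \<or> (\<exists>k\<in>K. F = P2 k) \<or> (\<exists>i\<in>I. \<exists>k. adj i k \<and> F = P3 i k)"
  then show "antimatroid_path feas F"
  proof (elim disjE bexE exE conjE)
    fix i assume "i \<in> I" "F = {i}"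
    then show ?thesis by (auto intro!: antimatroid_pathI feasible_singleton_I)
  next
    fix k assume k: "k \<in> K" and F: "F = P2 k"
    show ?thesis unfolding F
      by (rule antimatroid_pathI[of feas "P2 k" k, OF feasible_P2[OF k] _ P2_minimal[OF assms k]])
        (simp add: P2_def)
  next
    fix i k assume ik: "i \<in> I" "adj i k" and F: "F = P3 i k"
    show ?thesis unfolding F
      by (rule antimatroid_pathI[of feas "P3 i k" k, OF feasible_P3[OF ik] _ P3_minimal[OF ik]])
        (simp add: P3_def)
  qed
qed (rule path_cases)

end

theorem mainTheorem10:
  fixes K I :: "'a set" and adj :: "'a \<Rightarrow> 'a \<Rightarrow> bool"
  assumes "split_graph K I adj"
    and "\<forall>i\<in>I. nbhd (K \<union> I) adj {i} \<noteq> K"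
  shows "{F. antimatroid_path (shelling_feasible (K \<union> I) adj) F} =
           {{i} | i. i \<in> I}
         \<union> {{k} \<union> (nbhd (K \<union> I) adj {k} \<inter> I) | k. k \<in> K}
         \<union> {fos K I adj i \<union> {k} \<union> ((nbhd (K \<union> I) adj {k} \<inter> I) - {i}) | i k.
              i \<in> I \<and> k \<in> nbhd (K \<union> I) adj {i}}"
proof -
  interpret split_graph_setting K I adj by (rule split_graph_setting.intro) (rule assms(1))
  show ?thesis
  proof (rule set_eqI)
    fix F
    show "F \<in> {F. antimatroid_path feas F} \<longleftrightarrow> F \<in> {{i} | i. i \<in> I}
         \<union> {{k} \<union> (nbhd (K \<union> I) adj {k} \<inter> I) | k. k \<in> K}
         \<union> {fos K I adj i \<union> {k} \<union> ((nbhd (K \<union> I) adj {k} \<inter> I) - {i}) | i k.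
              i \<in> I \<and> k \<in> nbhd (K \<union> I) adj {i}}"
      unfolding mem_Collect_eq Un_iff path_iff[OF assms(2)] nbhd_singleton P2_def P3_def
      by blast
  qed
qed

end
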